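(* For every $n\geq 1$, the alternating Eulerian polynomial $\widehat{A}_n(t)$ is palindromic and unimodal. Moreover, if we write $$\widehat{A}_n(t)=\sum_{k=0}^{\lfloor (n-1)/2\rfloor}a(n,k)(-2t)^{k}(1+t)^{n-1-2k}\quad\text{and}\quad a_n(x)=\sum_{k=0}^{\lfloor (n-1)/2\rfloor}a(n,k)x^k,$$ then $a_n(x-1)=R_{n-1}(x)$, the descent polynomial over Simsun permutations of length $n-1$.
   Context: $\mathfrak{S}_n$ is the set of permutations $\pi=\pi_1\pi_2\cdots\pi_n$ of $[n]=\{1,\dots,n\}$. The alternating descent set of $\pi\in\mathfrak{S}_n$ is $\widehat{D}(\pi)=\{2i:\pi_{2i}<\pi_{2i+1}\}\cup\{2i+1:\pi_{2i+1}>\pi_{2i+2}\}$ (indices in $[n-1]$), and ${\rm altdes}(\pi)=|\widehat{D}(\pi)|$. The alternating Eulerian polynomial is $\widehat{A}_n(t)=\sum_{\pi\in\mathfrak{S}_n}t^{{\rm altdes}(\pi)}$. A polynomial $\sum_{i=0}^N h_it^i$ is unimodal if $h_0\le\cdots\le h_c\ge h_{c+1}\ge\cdots\ge h_N$ for some $c$, and palindromic if $h_i=h_{N-i}$ for all $i$. A descent of $\pi$ is an index $i$ with $\pi_i>\pi_{i+1}$; ${\rm des}(\pi)$ is the number of descents. A double descent of $\pi\in\mathfrak{S}_n$ is an index $i$, $2\le i\le n-1$, with $\pi_{i-1}>\pi_i>\pi_{i+1}$. A permutation in $\mathfrak{S}_n$ is Simsun if it has no double descents, and for every $k$ the word obtained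 by removing the letters $n,n-1,\dots,k$ also has no double descents. $R_n(x)=\sum_{\pi}x^{{\rm des}(\pi)}$, summed over Simsun permutations $\pi\in\mathfrak{S}_n$. *)

theory Defs
  imports "HOL-Combinatorics.Multiset_Permutations" "HOL-Computational_Algebra.Polynomial"
begin

(* Permutations of [n] are lists xs \<in> permutations_of_set {1..n}; the i-th letter
   pi_i (1-based) is xs ! (i - 1). *)

definition alt_des_set :: "nat list \<Rightarrow> nat set" where
  "alt_des_set xs = {i \<in> {1..<length xs}.
      (even i \<and> xs ! (i - 1) < xs ! i) \<or> (odd i \<and> xs ! (i - 1) > xs ! i)}"

definition altdes :: "nat list \<Rightarrow> nat" where
  "altdes xs = card (alt_des_set xs)"

definition alt_eulerian :: "nat \<Rightarrow> int poly" where
  "alt_eulerian n = (\<Sum>xs\<in>permutations_of_set {1..n}. monom 1 (altdes xs))"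

definition des :: "nat list \<Rightarrow> nat" where
  "des xs = card {i \<in> {1..<length xs}. xs ! (i - 1) > xs ! i}"

definition no_double_descents :: "nat list \<Rightarrow> bool" where
  "no_double_descents xs \<longleftrightarrow>
     \<not> (\<exists>i. 2 \<le> i \<and> i + 1 \<le> length xs \<and> xs ! (i - 2) > xs ! (i - 1) \<and> xs ! (i - 1) > xs ! i)"

(* Removing the letters n, n-1, ..., k leaves the letters < k. k = n+1 gives xs itself. *)
definition simsun :: "nat list \<Rightarrow> bool" where
  "simsun xs \<longleftrightarrow> (\<forall>k. no_double_descents (filter (\<lambda>x. x < k) xs))"

definition simsun_des_poly :: "nat \<Rightarrow> int poly" where
  "simsun_des_poly n = (\<Sum>xs\<in>{xs \<in> permutations_of_set {1..n}. simsun xs}. monom 1 (des xs))"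

definition palindromic :: "int poly \<Rightarrow> bool" where
  "palindromic p \<longleftrightarrow> (\<forall>i \<le> degree p. coeff p i = coeff p (degree p - i))"

definition unimodal :: "int poly \<Rightarrow> bool" where
  "unimodal p \<longleftrightarrow> (\<exists>c \<le> degree p.
      (\<forall>i j. i \<le> j \<and> j \<le> c \<longrightarrow> coeff p i \<le> coeff p j) \<and>
      (\<forall>i j. c \<le> i \<and> i \<le> j \<and> j \<le> degree p \<longrightarrow> coeff p j \<le> coeff p i))"

end

theory Submission
  imports Defs
begin

text \<open>Insert a new letter into each of the \<open>n + 1\<close> slots of a permutation of \<open>[n]\<close>, either a new
  maximum or a new minimum, and reverse the relative order of the letters to its right. This is a
  bijection onto the permutations of \<open>[n + 1]\<close> which changes the number of alternating descents
  only at the new letter, and counting the two insertions together gives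
  \<open>2 A\<^sub>n\<^sub>+\<^sub>1 = L\<^sub>n A\<^sub>n\<close> with \<open>L\<^sub>n p = 2(1 + t) p + (1 + t\<^sup>2)((n - 1) p + (1 - t) p')\<close>.
  Inserting \<open>n + 1\<close> into a Simsun permutation \<open>\<pi>\<close> of \<open>[n]\<close> keeps it Simsun except
  directly before a descent, which shows that
  \<open>P\<^sub>n = \<Sum>\<^sub>\<pi> (1 + t)\<^bsup>n - 2 des \<pi>\<^esup> (1 + t\<^sup>2)\<^bsup>des \<pi>\<^esup>\<close> satisfies the same recurrence,
  so \<open>A\<^sub>n\<^sub>+\<^sub>1 = P\<^sub>n\<close>. Writing \<open>1 + t\<^sup>2 = -2t + (1 + t)\<^sup>2\<close> gives
  \<open>a(n + 1, k) = \<Sum>\<^sub>\<pi> (des \<pi> choose k)\<close>, hence \<open>a\<^sub>n\<^sub>+\<^sub>1(x - 1) = \<Sum>\<^sub>\<pi> x\<^bsup>des \<pi>\<^esup>\<close>.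
  Finally, on coefficients \<open>L\<^sub>n\<close> preserves symmetry, nonnegativity and monotonicity up to the
  middle, which yields palindromicity and unimodality.\<close>

fun count_adj :: "(nat \<Rightarrow> 'a \<Rightarrow> 'a \<Rightarrow> bool) \<Rightarrow> nat \<Rightarrow> 'a list \<Rightarrow> nat" where
  "count_adj Q m (x # y # zs) = of_bool (Q m x y) + count_adj Q (Suc m) (y # zs)"
| "count_adj Q m _ = 0"

lemma card_adj_eq_count_adj:
  "card {j. Suc j < length xs \<and> Q (m + j) (xs ! j) (xs ! Suc j)} = count_adj Q m xs"
proof (induction Q m xs rule: count_adj.induct)
  case (1 Q m x y zs)
  let ?S = "{j. Suc j < length (y # zs) \<and> Q (Suc m + j) ((y # zs) ! j) ((y # zs) ! Suc j)}"
  have "{j. Suc j < length (x # y # zs) \<and> Q (m + j) ((x # y # zs) ! j) ((x # y # zs) ! Suc j)}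
      = (if Q m x y then {0} else {}) \<union> Suc ` ?S"
  proof (rule set_eqI)
    show "j \<in> {j. Suc j < length (x # y # zs) \<and> Q (m + j) ((x # y # zs) ! j) ((x # y # zs) ! Suc j)}
        \<longleftrightarrow> j \<in> (if Q m x y then {0} else {}) \<union> Suc ` ?S" for j
      by (cases j) auto
  qed
  moreover have "finite ?S"
    by (rule finite_subset[of _ "{..<length (y # zs)}"]) auto
  ultimately show ?case
    using 1 by (simp add: card_image)
qed auto

lemma count_adj_append:
  "count_adj Q m (xs @ y # ys) = count_adj Q m (xs @ [y]) + count_adj Q (m + length xs) (y # ys)"
proof (induction xs arbitrary: m)
  case (Cons x xs)
  then show ?case
    by (cases xs) (simp_all add: Cons.IH[of "Suc m"])
qed simp

lemma count_adj_map:
  assumes "\<And>j a b. Q j (f a) (f b) = Q j a b"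
  shows "count_adj Q m (map f ys) = count_adj Q m ys"
  by (induction ys arbitrary: m rule: induct_list012) (auto simp: assms)

lemma count_adj_map_shift:
  assumes "\<And>j a b. a \<in> set ys \<Longrightarrow> b \<in> set ys \<Longrightarrow> Q (Suc j) (f a) (f b) = Q j a b"
  shows "count_adj Q (Suc m) (map f ys) = count_adj Q m ys"
  using assms by (induction ys arbitrary: m rule: induct_list012) auto

text \<open>Inserting \<open>v\<close> moves the letters of \<open>s\<close> one position to the right; when \<open>f\<close> undoes this
  shift of \<open>Q\<close>, only the pairs next to \<open>v\<close> change.\<close>

lemma count_adj_insert:
  assumes "\<And>j a b. a \<in> set s \<Longrightarrow> b \<in> set s \<Longrightarrow> Q (Suc j) (f a) (f b) = Q j a b"
  shows "count_adj Q 0 (p @ v # map f s) + of_bool (p \<noteq> [] \<and> s \<noteq> [] \<and> Q (length p - 1) (last p) (hd s))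
       = count_adj Q 0 (p @ s) + of_bool (p \<noteq> [] \<and> Q (length p - 1) (last p) v)
         + of_bool (s \<noteq> [] \<and> Q (length p) v (f (hd s)))"
proof -
  have shift: "count_adj Q m (v # map f s) = of_bool (s \<noteq> [] \<and> Q m v (f (hd s))) + count_adj Q m s" for m
    using count_adj_map_shift[of s Q f m, OF assms] by (cases s) auto
  show ?thesis
  proof (cases p rule: rev_exhaust)
    case Nil
    then show ?thesis by (simp add: shift)
  next
    case (snoc p' a)
    have split_v: "count_adj Q 0 (p @ v # map f s)
        = count_adj Q 0 p + of_bool (Q (length p') a v) + count_adj Q (length p) (v # map f s)"
      using count_adj_append[of Q 0 "p' @ [a]" v "map f s"] count_adj_append[of Q 0 p' a "[v]"] snoc
      by simp
    show ?thesis
    proof (cases s)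
      case Nil
      then show ?thesis using split_v snoc by simp
    next
      case (Cons b s')
      have "count_adj Q 0 (p @ s) = count_adj Q 0 p + of_bool (Q (length p') a b) + count_adj Q (length p) s"
        using count_adj_append[of Q 0 "p' @ [a]" b s'] count_adj_append[of Q 0 p' a "[b]"] snoc Cons
        by simp
      then show ?thesis using split_v shift snoc Cons by simp
    qed
  qed
qed

text \<open>The index \<open>j\<close> is 0-based: \<open>alt_desc_at j\<close> decides whether \<open>j + 1\<close> lies in \<open>alt_des_set\<close>.\<close>

definition alt_desc_at :: "nat \<Rightarrow> nat \<Rightarrow> nat \<Rightarrow> bool" where
  "alt_desc_at j a b \<longleftrightarrow> (if even j then b < a else a < b)"

lemma mem_alt_des_set:
  "i \<in> alt_des_set xs \<longleftrightarrow> 0 < i \<and> i < length xs \<and> alt_desc_at (i - 1) (xs ! (i - 1)) (xs ! i)"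
  by (cases i) (auto simp: alt_des_set_def alt_desc_at_def)

lemma altdes_eq_count_adj: "altdes xs = count_adj alt_desc_at 0 xs"
proof -
  have "alt_des_set xs = Suc ` {j. Suc j < length xs \<and> alt_desc_at (0 + j) (xs ! j) (xs ! Suc j)}"
  proof (rule set_eqI)
    show "i \<in> alt_des_set xs \<longleftrightarrow> i \<in> Suc ` {j. Suc j < length xs \<and> alt_desc_at (0 + j) (xs ! j) (xs ! Suc j)}" for i
      by (cases i) (auto simp: mem_alt_des_set)
  qed
  then show ?thesis
    unfolding altdes_def card_adj_eq_count_adj[symmetric] by (simp add: card_image)
qed

definition descent_at :: "'a::linorder list \<Rightarrow> nat \<Rightarrow> bool" where
  "descent_at xs i \<longleftrightarrow> Suc i < length xs \<and> xs ! Suc i < xs ! i"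

lemma des_eq_card_descent_at: "des xs = card {i. descent_at xs i}"
proof -
  have "{i \<in> {1..<length xs}. xs ! (i - 1) > xs ! i} = Suc ` {i. descent_at xs i}"
  proof (rule set_eqI)
    show "i \<in> {i \<in> {1..<length xs}. xs ! (i - 1) > xs ! i} \<longleftrightarrow> i \<in> Suc ` {i. descent_at xs i}" for i
      by (cases i) (auto simp: descent_at_def)
  qed
  then show ?thesis
    unfolding des_def by (simp add: card_image)
qed

lemma des_eq_count_adj: "des xs = count_adj (\<lambda>_ a b. b < a) 0 xs"
  unfolding des_eq_card_descent_at card_adj_eq_count_adj[symmetric] descent_at_def by simp

section \<open>Inserting a letter into a permutation\<close>

definition reflect :: "'a::linorder set \<Rightarrow> 'a \<Rightarrow> 'a" where
  "reflect S y = the (map_of (zip (sorted_list_of_set S) (rev (sorted_list_of_set S))) y)"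

lemma strict_sorted_nth_less_iff:
  fixes xs :: "'a::linorder list"
  assumes "sorted_wrt (<) xs" "i < length xs" "j < length xs"
  shows "xs ! i < xs ! j \<longleftrightarrow> i < j"
proof (cases i j rule: linorder_cases)
  case greater
  then have "xs ! j < xs ! i"
    using sorted_wrt_nth_less[OF assms(1)] assms by blast
  then show ?thesis
    using greater by auto
qed (use sorted_wrt_nth_less[OF assms(1)] assms in auto)

lemma reflect_nth:
  assumes "finite S" "i < card S"
  shows "reflect S (sorted_list_of_set S ! i) = sorted_list_of_set S ! (card S - 1 - i)"
proof -
  let ?L = "sorted_list_of_set S"
  have "map_of (zip ?L (rev ?L)) (?L ! i) = Some (rev ?L ! i)"
    by (rule map_of_zip_nth) (use assms in auto)
  then show ?thesis
    using assms by (simp add: reflect_def rev_nth)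
qed

lemma sorted_list_of_set_indexE:
  assumes "finite S" "a \<in> S"
  obtains i where "i < card S" "a = sorted_list_of_set S ! i"
  using assms by (metis in_set_conv_nth length_sorted_list_of_set set_sorted_list_of_set)

lemma reflect_in:
  assumes "finite S" "a \<in> S"
  shows "reflect S a \<in> S"
proof -
  obtain i where i: "i < card S" "a = sorted_list_of_set S ! i"
    using assms by (rule sorted_list_of_set_indexE)
  then have "card S - 1 - i < length (sorted_list_of_set S)"
    by simp
  then have "sorted_list_of_set S ! (card S - 1 - i) \<in> set (sorted_list_of_set S)"
    by (rule nth_mem)
  moreover have "reflect S a = sorted_list_of_set S ! (card S - 1 - i)"
    using i assms(1) by (simp add: reflect_nth)
  ultimately show ?thesis
    using assms(1) by simp
qed

lemma reflect_less_iff: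
  assumes "finite S" "a \<in> S" "b \<in> S"
  shows "reflect S a < reflect S b \<longleftrightarrow> b < a"
proof -
  let ?L = "sorted_list_of_set S"
  obtain i j where ij: "i < card S" "a = ?L ! i" "j < card S" "b = ?L ! j"
    using assms by (metis sorted_list_of_set_indexE)
  have less_iff: "?L ! k < ?L ! l \<longleftrightarrow> k < l" if "k < card S" "l < card S" for k l
    using strict_sorted_nth_less_iff[OF strict_sorted_list_of_set, of k S l] that assms(1) by simp
  have "reflect S a < reflect S b \<longleftrightarrow> card S - 1 - i < card S - 1 - j"
    using ij reflect_nth[OF assms(1)] less_iff[of "card S - 1 - i" "card S - 1 - j"] by simp
  also have "\<dots> \<longleftrightarrow> b < a"
    using ij less_iff by auto
  finally show ?thesis .
qed

lemma bij_betw_reflect: "finite S \<Longrightarrow> bij_betw (reflect S) S S"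
proof -
  assume S: "finite S"
  have "inj_on (reflect S) S"
    by (rule inj_onI) (metis S linorder_neqE reflect_less_iff order.irrefl)
  with S show ?thesis
    by (simp add: bij_betw_def endo_inj_surj image_subsetI reflect_in)
qed

definition insert_relabel :: "('a set \<Rightarrow> 'a \<Rightarrow> 'a) \<Rightarrow> 'a \<Rightarrow> 'a list \<Rightarrow> nat \<Rightarrow> 'a list" where
  "insert_relabel F v xs i = take i xs @ v # map (F (set (drop i xs))) (drop i xs)"

lemma insert_relabel_id: "insert_relabel (\<lambda>_. id) v xs i = take i xs @ v # drop i xs"
  by (simp add: insert_relabel_def)

context
  fixes F :: "'a set \<Rightarrow> 'a \<Rightarrow> 'a"
  assumes F_bij: "\<And>S. finite S \<Longrightarrow> bij_betw (F S) S S"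
begin

lemma insert_relabel_in_permutations:
  assumes xs: "xs \<in> permutations_of_set A" and v: "v \<notin> A"
  shows "insert_relabel F v xs i \<in> permutations_of_set (insert v A)"
proof -
  let ?S = "set (drop i xs)"
  have bij: "bij_betw (F ?S) ?S ?S"
    by (rule F_bij) simp
  have "set (take i xs) \<union> ?S = A" "set (take i xs) \<inter> ?S = {}"
    using xs by (auto simp: permutations_of_set_def set_take_disj_set_drop_if_distinct
        simp flip: set_append)
  then show ?thesis
    using xs v bij by (auto simp: permutations_of_set_def insert_relabel_def distinct_map bij_betw_def)
qed

lemma insert_relabel_inj:
  assumes v: "v \<notin> set xs" "v \<notin> set ys" and i: "i \<le> length xs" "j \<le> length ys"
    and eq: "insert_relabel F v xs i = insert_relabel F v ys j"
  shows "xs = ys \<and> i = j"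
proof -
  have prefix: "takeWhile (\<lambda>x. x \<noteq> v) (insert_relabel F v zs k) = take k zs" if "v \<notin> set zs" for zs k
  proof -
    have "\<forall>x\<in>set (take k zs). x \<noteq> v"
      using that by (auto dest: in_set_takeD)
    then show ?thesis
      by (simp add: insert_relabel_def)
  qed
  have take_eq: "take i xs = take j ys"
    using prefix[OF v(1), of i] prefix[OF v(2), of j] eq by simp
  then have ij: "i = j"
    using i by (metis length_take min.absorb2)
  let ?S = "set (drop i xs)" and ?T = "set (drop i ys)"
  have maps: "map (F ?S) (drop i xs) = map (F ?T) (drop i ys)"
    using eq take_eq ij by (simp add: insert_relabel_def)
  have "F ?S ` ?S = ?S" "F ?T ` ?T = ?T" "inj_on (F ?S) ?S"
    using F_bij[of ?S] F_bij[of ?T] by (simp_all add: bij_betw_def)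
  moreover from this(1,2) have "?S = ?T"
    using arg_cong[OF maps, of set] by simp
  ultimately have "drop i xs = drop i ys"
    using maps map_inj_on by (metis Un_absorb)
  then show ?thesis
    using take_eq ij by (metis append_take_drop_id)
qed

lemma bij_betw_insert_relabel:
  assumes A: "finite A" and v: "v \<notin> A"
  shows "bij_betw (\<lambda>(xs, i). insert_relabel F v xs i)
           (permutations_of_set A \<times> {..card A}) (permutations_of_set (insert v A))"
proof -
  let ?g = "\<lambda>(xs, i). insert_relabel F v xs i"
  have len: "xs \<in> permutations_of_set A \<Longrightarrow> length xs = card A" for xs
    by (rule length_finite_permutations_of_set)
  have inj: "inj_on ?g (permutations_of_set A \<times> {..card A})"
  proof (rule inj_onI)
    fix p q
    assume "p \<in> permutations_of_set A \<times> {..card A}" "q \<in> permutations_of_set A \<times> {..card A}"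
      and eq: "?g p = ?g q"
    moreover obtain xs i ys j where "p = (xs, i)" "q = (ys, j)"
      by fastforce
    ultimately show "p = q"
      using v len insert_relabel_inj[of v xs ys i j] by (auto simp: permutations_of_set_def)
  qed
  have into: "?g ` (permutations_of_set A \<times> {..card A}) \<subseteq> permutations_of_set (insert v A)"
    using insert_relabel_in_permutations v by auto
  have "card (?g ` (permutations_of_set A \<times> {..card A})) = card (permutations_of_set (insert v A))"
    using A v inj by (simp add: card_image card_cartesian_product)
  then show ?thesis
    using inj into by (simp add: bij_betw_def card_subset_eq)
qed

lemma sum_permutations_insert:
  assumes "finite A" "v \<notin> A"
  shows "(\<Sum>s\<in>permutations_of_set (insert v A). h s)
     = (\<Sum>xs\<in>permutations_of_set A. \<Sum>i\<le>card A. h (insert_relabel F v xs i))"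
  using sum.reindex_bij_betw[OF bij_betw_insert_relabel[OF assms], of h]
  by (simp add: sum.cartesian_product split_def)

end

lemma sum_permutations_insert_max:
  assumes "\<And>S. finite S \<Longrightarrow> bij_betw (F S) S S"
  shows "(\<Sum>s\<in>permutations_of_set {1..Suc n}. h s)
     = (\<Sum>xs\<in>permutations_of_set {1..n}. \<Sum>i\<le>n. h (insert_relabel F (Suc n) xs i))"
  using sum_permutations_insert[OF assms, of "{1..n}" "Suc n" h] by (simp add: atLeastAtMostSuc_conv)

lemma sum_permutations_insert_min:
  assumes "\<And>S. finite S \<Longrightarrow> bij_betw (F S) S S"
  shows "(\<Sum>s\<in>permutations_of_set {1..Suc n}. h s)
     = (\<Sum>xs\<in>permutations_of_set {1..n}. \<Sum>i\<le>n. h (map Suc (insert_relabel F 0 xs i)))"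
proof -
  have "permutations_of_set {1..Suc n} = map Suc ` permutations_of_set (insert 0 {1..n})"
  proof -
    have "{1..Suc n} = Suc ` insert 0 {1..n}"
      by (auto simp: image_iff)
    moreover have "permutations_of_set (Suc ` insert 0 {1..n}) = map Suc ` permutations_of_set (insert 0 {1..n})"
      by (rule permutations_of_set_image_inj) simp
    ultimately show ?thesis
      by (simp only:)
  qed
  moreover have "inj_on (map Suc) (permutations_of_set (insert 0 {1..n}))"
    by (simp add: inj_on_def)
  ultimately show ?thesis
    using sum_permutations_insert[OF assms, of "{1..n}" 0 "\<lambda>s. h (map Suc s)"] by (simp add: sum.reindex)
qed

section \<open>A recurrence for the alternating Eulerian polynomials\<close>

lemma altdes_map_Suc: "altdes (map Suc xs) = altdes xs"
  unfolding altdes_eq_count_adj by (rule count_adj_map) (simp add: alt_desc_at_def)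

text \<open>Inserting a letter shifts the parity of every later position; reflecting the order of the
  later letters compensates this, so only the pairs next to the new letter change.\<close>

lemma altdes_insert_reflect:
  assumes i: "i \<le> length xs"
  shows "altdes (insert_relabel reflect v xs i) + of_bool (i \<in> alt_des_set xs)
       = altdes xs + of_bool (0 < i \<and> alt_desc_at (i - 1) (xs ! (i - 1)) v)
         + of_bool (i < length xs \<and> alt_desc_at i v (reflect (set (drop i xs)) (xs ! i)))"
proof -
  let ?S = "set (drop i xs)"
  have "alt_desc_at (Suc j) (reflect ?S a) (reflect ?S b) = alt_desc_at j a b"
    if "a \<in> ?S" "b \<in> ?S" for j a b
    using that by (auto simp: alt_desc_at_def reflect_less_iff)
  from count_adj_insert[of "drop i xs" alt_desc_at "reflect ?S", OF this]
  have "count_adj alt_desc_at 0 (take i xs @ v # map (reflect ?S) (drop i xs))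
      + of_bool (take i xs \<noteq> [] \<and> drop i xs \<noteq> [] \<and>
          alt_desc_at (length (take i xs) - 1) (last (take i xs)) (hd (drop i xs)))
    = count_adj alt_desc_at 0 (take i xs @ drop i xs)
      + of_bool (take i xs \<noteq> [] \<and> alt_desc_at (length (take i xs) - 1) (last (take i xs)) v)
      + of_bool (drop i xs \<noteq> [] \<and> alt_desc_at (length (take i xs)) v (reflect ?S (hd (drop i xs))))" .
  moreover have "take i xs \<noteq> [] \<longleftrightarrow> 0 < i" "drop i xs \<noteq> [] \<longleftrightarrow> i < length xs"
    "length (take i xs) = i"
    using i by auto
  moreover have "0 < i \<Longrightarrow> last (take i xs) = xs ! (i - 1)"
    using i by (subst last_conv_nth) (auto simp: min_def)
  moreover have "i < length xs \<Longrightarrow> hd (drop i xs) = xs ! i"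
    by (simp add: hd_drop_conv_nth)
  ultimately show ?thesis
    unfolding altdes_eq_count_adj insert_relabel_def mem_alt_des_set
    by (cases "0 < i"; cases "i < length xs") auto
qed

lemma reflect_drop_nth_in_set:
  assumes "i < length xs"
  shows "reflect (set (drop i xs)) (xs ! i) \<in> set xs"
proof -
  have "xs ! i \<in> set (drop i xs)"
    using assms by (metis Cons_nth_drop_Suc list.set_intros(1))
  then show ?thesis
    using reflect_in[of "set (drop i xs)"] set_drop_subset by fastforce
qed

lemma altdes_insert_max:
  assumes xs: "xs \<in> permutations_of_set {1..n}" and i: "i \<le> n"
  shows "altdes (insert_relabel reflect (Suc n) xs i) + of_bool (i \<in> alt_des_set xs)
       = altdes xs + of_bool (0 < i \<and> even i) + of_bool (i < n \<and> even i)"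
proof -
  have len: "length xs = n" and set_xs: "set xs = {1..n}"
    using xs by (auto simp: permutations_of_set_def length_finite_permutations_of_set)
  have "0 < i \<Longrightarrow> xs ! (i - 1) \<in> set xs" "i < n \<Longrightarrow> reflect (set (drop i xs)) (xs ! i) \<in> set xs"
    using i len reflect_drop_nth_in_set by auto
  then have "0 < i \<Longrightarrow> xs ! (i - 1) < Suc n" "i < n \<Longrightarrow> reflect (set (drop i xs)) (xs ! i) < Suc n"
    unfolding set_xs by auto
  then show ?thesis
    using altdes_insert_reflect[of i xs "Suc n"] i len unfolding alt_desc_at_def
    by (cases "0 < i"; cases "i < n") auto
qed

lemma altdes_insert_min:
  assumes xs: "xs \<in> permutations_of_set {1..n}" and i: "i \<le> n"
  shows "altdes (map Suc (insert_relabel reflect 0 xs i)) + of_bool (i \<in> alt_des_set xs)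
       = altdes xs + of_bool (0 < i \<and> odd i) + of_bool (i < n \<and> odd i)"
proof -
  have len: "length xs = n" and set_xs: "set xs = {1..n}"
    using xs by (auto simp: permutations_of_set_def length_finite_permutations_of_set)
  have "0 < i \<Longrightarrow> xs ! (i - 1) \<in> set xs" "i < n \<Longrightarrow> reflect (set (drop i xs)) (xs ! i) \<in> set xs"
    using i len reflect_drop_nth_in_set by auto
  then have "0 < i \<Longrightarrow> 0 < xs ! (i - 1)" "i < n \<Longrightarrow> 0 < reflect (set (drop i xs)) (xs ! i)"
    unfolding set_xs by auto
  then show ?thesis
    using altdes_insert_reflect[of i xs 0] i len unfolding alt_desc_at_def altdes_map_Suc
    by (cases "0 < i"; cases "i < n") auto
qed

definition X :: "int poly" where "X = [:0, 1:]"

lemma pderiv_X [simp]: "pderiv X = 1"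
  by (simp add: X_def pderiv_pCons)

lemma monom_1_eq_X_power: "monom 1 k = X ^ k"
  by (simp add: X_def monom_altdef)

lemma smult_of_nat_eq_mult: "smult (of_nat k) p = of_nat k * p"
  by (simp add: of_nat_poly)

text \<open>The operator \<open>L\<^sub>n\<close> of the recurrence; its value on \<open>X ^ a\<close> is the count of
  \<open>sum_altdes_insert_extremes\<close>, which is where the formula comes from.\<close>

definition alt_eulerian_op :: "nat \<Rightarrow> int poly \<Rightarrow> int poly" where
  "alt_eulerian_op n p = (2 + 2 * X) * p + (1 + X\<^sup>2) * ((of_nat n - 1) * p + (1 - X) * pderiv p)"

lemma alt_eulerian_op_sum: "alt_eulerian_op n (sum f A) = (\<Sum>x\<in>A. alt_eulerian_op n (f x))"
  by (induction A rule: infinite_finite_induct)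
    (simp_all add: alt_eulerian_op_def pderiv_add algebra_simps)

lemma alt_eulerian_op_X_power:
  assumes "m < n"
  shows "alt_eulerian_op n (X ^ m) = 2 * (X ^ m + X ^ (m + 1)) + of_nat m * (X ^ (m - 1) + X ^ (m + 1))
      + of_nat (n - 1 - m) * (X ^ m + X ^ (m + 2))"
proof (cases m)
  case 0
  then show ?thesis
    using assms by (simp add: alt_eulerian_op_def algebra_simps power2_eq_square)
next
  case (Suc b)
  obtain k where k: "n - 1 - Suc b = k" "(of_nat n :: int poly) - 1 = 1 + of_nat b + of_nat k"
    using assms Suc by simp
  have deriv: "pderiv (X ^ Suc b) = of_nat (Suc b) * X ^ b"
    by (simp only: pderiv_power_Suc pderiv_X smult_of_nat_eq_mult mult_1_right)
  show ?thesis
    unfolding alt_eulerian_op_def Suc k deriv diff_Suc_1 by (simp add: algebra_simps power2_eq_square)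
qed

lemma altdes_insert_extremes:
  assumes n: "1 \<le> n" and xs: "xs \<in> permutations_of_set {1..n}" and i: "i \<le> n"
  defines "a \<equiv> altdes xs"
  shows "X ^ altdes (insert_relabel reflect (Suc n) xs i) + X ^ altdes (map Suc (insert_relabel reflect 0 xs i))
    = (if i = 0 \<or> i = n then X ^ a + X ^ (a + 1)
       else if i \<in> alt_des_set xs then X ^ (a - 1) + X ^ (a + 1) else X ^ a + X ^ (a + 2))"
proof -
  let ?M = "altdes (insert_relabel reflect (Suc n) xs i)"
  let ?m = "altdes (map Suc (insert_relabel reflect 0 xs i))"
  have max: "?M + of_bool (i \<in> alt_des_set xs) = a + of_bool (0 < i \<and> even i) + of_bool (i < n \<and> even i)"
    and min: "?m + of_bool (i \<in> alt_des_set xs) = a + of_bool (0 < i \<and> odd i) + of_bool (i < n \<and> odd i)"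
    using altdes_insert_max[OF xs i] altdes_insert_min[OF xs i] by (simp_all add: a_def)
  consider (ends) "i = 0 \<or> i = n" | (des) "0 < i" "i < n" "i \<in> alt_des_set xs"
    | (asc) "0 < i" "i < n" "i \<notin> alt_des_set xs"
    using i by linarith
  then show ?thesis
  proof cases
    case ends
    then have "i \<notin> alt_des_set xs"
      using xs by (auto simp: mem_alt_des_set length_finite_permutations_of_set)
    then have "(?M, ?m) = (if even i then (a + 1, a) else (a, a + 1))"
      using max min ends n by auto
    then show ?thesis
      using ends by (auto split: if_splits simp: add.commute)
  next
    case des
    then have "(?M, ?m) = (if even i then (a + 1, a - 1) else (a - 1, a + 1))"
      using max min by auto
    then show ?thesis
      using des by (auto split: if_splits simp: add.commute)
  next
    case asc
    then have "(?M, ?m) = (if even i then (a + 2, a) else (a, a + 2))"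
      using max min by auto
    then show ?thesis
      using asc by (auto split: if_splits simp: add.commute)
  qed
qed

lemma sum_altdes_insert_extremes:
  assumes n: "1 \<le> n" and xs: "xs \<in> permutations_of_set {1..n}"
  shows "(\<Sum>i\<le>n. X ^ altdes (insert_relabel reflect (Suc n) xs i)
                  + X ^ altdes (map Suc (insert_relabel reflect 0 xs i)))
       = alt_eulerian_op n (X ^ altdes xs)"
proof -
  define a where "a = altdes xs"
  define I where "I = alt_des_set xs"
  define G where "G i = (if i = 0 \<or> i = n then X ^ a + X ^ (a + 1)
       else if i \<in> I then X ^ (a - 1) + X ^ (a + 1) else X ^ a + X ^ (a + 2))" for i
  have I_sub: "I \<subseteq> {1..<n}"
    using xs by (auto simp: I_def alt_des_set_def length_finite_permutations_of_set)
  have card_I: "card I = a"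
    by (simp add: I_def a_def altdes_def)
  then have card_J: "card ({1..<n} - I) = n - 1 - a" and a: "a < n"
    using I_sub n card_mono[OF _ I_sub] by (simp_all add: card_Diff_subset finite_subset)
  have "(\<Sum>i\<le>n. X ^ altdes (insert_relabel reflect (Suc n) xs i)
                  + X ^ altdes (map Suc (insert_relabel reflect 0 xs i))) = (\<Sum>i\<le>n. G i)"
    unfolding G_def I_def a_def by (rule sum.cong) (simp_all add: altdes_insert_extremes[OF n xs])
  also have "\<dots> = G 0 + G n + ((\<Sum>i\<in>{1..<n} - I. G i) + (\<Sum>i\<in>I. G i))"
  proof -
    have "{..n} = insert 0 (insert n {1..<n})"
      using n by auto
    then show ?thesis
      using n I_sub by (simp add: sum.subset_diff add.assoc)
  qed
  also have "\<dots> = 2 * (X ^ a + X ^ (a + 1)) + of_nat (n - 1 - a) * (X ^ a + X ^ (a + 2))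
      + of_nat a * (X ^ (a - 1) + X ^ (a + 1))"
  proof -
    have "G i = X ^ a + X ^ (a + 2)" if "i \<in> {1..<n} - I" for i
      using that by (simp add: G_def)
    moreover have "G i = X ^ (a - 1) + X ^ (a + 1)" if "i \<in> I" for i
      using that I_sub by (auto simp: G_def)
    ultimately show ?thesis
      using card_I card_J by (simp add: G_def)
  qed
  also have "\<dots> = alt_eulerian_op n (X ^ a)"
    by (simp add: alt_eulerian_op_X_power[OF a] algebra_simps)
  finally show ?thesis
    by (simp only: a_def)
qed

theorem alt_eulerian_rec:
  assumes "1 \<le> n"
  shows "2 * alt_eulerian (Suc n) = alt_eulerian_op n (alt_eulerian n)"
proof -
  have alt_eulerian_X: "alt_eulerian m = (\<Sum>xs\<in>permutations_of_set {1..m}. X ^ altdes xs)" for m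
    unfolding alt_eulerian_def monom_1_eq_X_power ..
  have max: "alt_eulerian (Suc n)
      = (\<Sum>xs\<in>permutations_of_set {1..n}. \<Sum>i\<le>n. X ^ altdes (insert_relabel reflect (Suc n) xs i))"
    unfolding alt_eulerian_X by (rule sum_permutations_insert_max[OF bij_betw_reflect])
  have min: "alt_eulerian (Suc n)
      = (\<Sum>xs\<in>permutations_of_set {1..n}. \<Sum>i\<le>n. X ^ altdes (map Suc (insert_relabel reflect 0 xs i)))"
    unfolding alt_eulerian_X by (rule sum_permutations_insert_min[OF bij_betw_reflect])
  have "2 * alt_eulerian (Suc n) = alt_eulerian (Suc n) + alt_eulerian (Suc n)"
    by (rule mult_2)
  also have "\<dots> = (\<Sum>xs\<in>permutations_of_set {1..n}. \<Sum>i\<le>n. X ^ altdes (insert_relabel reflect (Suc n) xs i)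
          + X ^ altdes (map Suc (insert_relabel reflect 0 xs i)))"
    unfolding sum.distrib using max min by (rule arg_cong2)
  also have "\<dots> = (\<Sum>xs\<in>permutations_of_set {1..n}. alt_eulerian_op n (X ^ altdes xs))"
    by (simp add: sum_altdes_insert_extremes[OF assms])
  finally show ?thesis
    unfolding alt_eulerian_X alt_eulerian_op_sum .
qed

section \<open>Simsun permutations\<close>

lemma no_double_descents_altdef:
  "no_double_descents xs \<longleftrightarrow> (\<forall>j. \<not> (descent_at xs j \<and> descent_at xs (Suc j)))"
proof -
  have "(\<exists>i\<ge>2. P i) \<longleftrightarrow> (\<exists>j. P (Suc (Suc j)))" for P
    by (metis add_2_eq_Suc le_add1 le_Suc_ex)
  from this[of "\<lambda>i. i + 1 \<le> length xs \<and> xs ! (i - 2) > xs ! (i - 1) \<and> xs ! (i - 1) > xs ! i"]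
  show ?thesis
    unfolding no_double_descents_def descent_at_def by auto
qed

fun no_dd :: "'a::linorder list \<Rightarrow> bool" where
  "no_dd (a # b # c # zs) \<longleftrightarrow> \<not> (b < a \<and> c < b) \<and> no_dd (b # c # zs)"
| "no_dd _ \<longleftrightarrow> True"

lemma no_double_descents_eq_no_dd: "no_double_descents xs \<longleftrightarrow> no_dd xs"
  unfolding no_double_descents_altdef
proof (induction xs rule: no_dd.induct)
  case (1 a b c zs)
  have "(\<forall>j. P j) \<longleftrightarrow> P 0 \<and> (\<forall>j. P (Suc j))" for P :: "nat \<Rightarrow> bool"
    by (metis not0_implies_Suc)
  from this[of "\<lambda>j. \<not> (descent_at (a # b # c # zs) j \<and> descent_at (a # b # c # zs) (Suc j))"] 1
  show ?case
    by (simp add: descent_at_def)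
qed (auto simp: descent_at_def)

lemma descent_at_drop: "descent_at (drop i xs) j \<longleftrightarrow> descent_at xs (i + j)"
  by (auto simp: descent_at_def)

lemma no_dd_Cons_Cons: "no_dd (x # y # zs) \<longleftrightarrow> (zs \<noteq> [] \<longrightarrow> \<not> (y < x \<and> hd zs < y)) \<and> no_dd (y # zs)"
  by (cases zs) auto

lemma no_dd_Cons_max:
  assumes "\<forall>x\<in>set s. x < v"
  shows "no_dd (v # s) \<longleftrightarrow> no_dd s \<and> \<not> descent_at s 0"
  using assms by (cases s rule: no_dd.cases) (auto simp: descent_at_def)

lemma no_dd_append_max:
  assumes "\<forall>x\<in>set p. x < v" "\<forall>x\<in>set s. x < v"
  shows "no_dd (p @ v # s) \<longleftrightarrow> no_dd p \<and> no_dd s \<and> \<not> descent_at s 0"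
  using assms
proof (induction p rule: induct_list012)
  case 1
  then show ?case
    by (simp add: no_dd_Cons_max)
next
  case (2 x)
  then show ?case
    by (auto simp: no_dd_Cons_Cons no_dd_Cons_max dest: order.asym)
next
  case (3 x y zs)
  then show ?case
    by (cases zs) (auto simp: no_dd_Cons_Cons)
qed

lemma no_dd_appendD: "no_dd (p @ s) \<Longrightarrow> no_dd p \<and> no_dd s"
proof (induction p rule: induct_list012)
  case (2 x)
  then show ?case
    by (cases s) (auto simp: no_dd_Cons_Cons)
next
  case (3 x y zs)
  then show ?case
    by (cases zs) (auto simp: no_dd_Cons_Cons)
qed simp_all

lemma simsun_iff_filter:
  assumes "\<forall>x\<in>set s. x \<le> m"
  shows "simsun s \<longleftrightarrow> simsun (filter (\<lambda>x. x < m) s) \<and> no_double_descents s"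
proof -
  let ?P = "\<lambda>k. no_double_descents (filter (\<lambda>x. x < k) s)"
  have below: "filter (\<lambda>x. x < k) (filter (\<lambda>x. x < m) s) = filter (\<lambda>x. x < min k m) s" for k
    by (simp add: conj_commute)
  have above: "filter (\<lambda>x. x < k) s = s" if "m < k" for k
    using assms that by (auto simp: filter_id_conv)
  have "(\<forall>k. ?P k) \<longleftrightarrow> (\<forall>k. ?P (min k m)) \<and> ?P (Suc m)"
    by (metis above lessI min.absorb1 not_le)
  then show ?thesis
    unfolding simsun_def below using above[of "Suc m"] by simp
qed

lemma simsun_imp_no_double_descents:
  assumes "simsun xs"
  shows "no_double_descents xs"
proof -
  obtain k where "\<forall>x\<in>set xs. x < k"
    by (metis finite_nat_set_iff_bounded finite_set)
  then have "filter (\<lambda>x. x < k) xs = xs"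
    by (simp add: filter_id_conv)
  then show ?thesis
    using assms unfolding simsun_def by metis
qed

lemma simsun_insert_max:
  assumes v: "\<forall>x\<in>set xs. x < v"
  shows "simsun (take i xs @ v # drop i xs) \<longleftrightarrow> simsun xs \<and> \<not> descent_at xs i"
proof -
  let ?s = "take i xs @ v # drop i xs"
  have v': "\<forall>x\<in>set (take i xs). x < v" "\<forall>x\<in>set (drop i xs). x < v"
    using v by (auto dest: in_set_takeD in_set_dropD)
  have "\<forall>x\<in>set ?s. x \<le> v"
    using v' by auto
  moreover have "filter (\<lambda>x. x < v) ?s = xs"
    using v' by (simp add: filter_id_conv del: append_take_drop_id) (simp add: filter_id_conv v)
  ultimately have "simsun ?s \<longleftrightarrow> simsun xs \<and> no_dd ?s"
    using simsun_iff_filter[of ?s v] by (simp only: no_double_descents_eq_no_dd)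
  moreover have "no_dd ?s \<longleftrightarrow> no_dd (take i xs) \<and> no_dd (drop i xs) \<and> \<not> descent_at xs i"
    using no_dd_append_max[OF v'] by (simp add: descent_at_drop)
  moreover have "simsun xs \<Longrightarrow> no_dd (take i xs) \<and> no_dd (drop i xs)"
    using no_dd_appendD[of "take i xs" "drop i xs"] simsun_imp_no_double_descents[of xs]
    by (simp add: no_double_descents_eq_no_dd)
  ultimately show ?thesis
    by blast
qed

lemma des_insert_max:
  assumes v: "\<forall>x\<in>set xs. x < v" and i: "i \<le> length xs"
  shows "des (take i xs @ v # drop i xs) + of_bool (0 < i \<and> descent_at xs (i - 1))
       = des xs + of_bool (i < length xs)"
proof -
  have "count_adj (\<lambda>_ a b. b < a) 0 (take i xs @ v # map id (drop i xs))
      + of_bool (take i xs \<noteq> [] \<and> drop i xs \<noteq> [] \<and> hd (drop i xs) < last (take i xs))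
    = count_adj (\<lambda>_ a b. b < a) 0 (take i xs @ drop i xs)
      + of_bool (take i xs \<noteq> [] \<and> v < last (take i xs))
      + of_bool (drop i xs \<noteq> [] \<and> hd (drop i xs) < v)"
    using count_adj_insert[of "drop i xs" "\<lambda>_ a b. b < a" id "take i xs" v] by simp
  moreover have "take i xs \<noteq> [] \<longleftrightarrow> 0 < i" "drop i xs \<noteq> [] \<longleftrightarrow> i < length xs"
    using i by auto
  moreover have "0 < i \<Longrightarrow> last (take i xs) = xs ! (i - 1)"
    using i by (subst last_conv_nth) (auto simp: min_def)
  moreover have "i < length xs \<Longrightarrow> hd (drop i xs) = xs ! i"
    by (simp add: hd_drop_conv_nth)
  moreover have "0 < i \<Longrightarrow> xs ! (i - 1) < v" "i < length xs \<Longrightarrow> xs ! i < v"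
    using v i by auto
  ultimately show ?thesis
    unfolding des_eq_count_adj descent_at_def
    by (cases "0 < i"; cases "i < length xs") auto
qed

lemma des_insert_max_cases:
  assumes v: "\<forall>x\<in>set xs. x < v" and i: "i \<le> length xs"
  shows "des (take i xs @ v # drop i xs)
       = (if i = length xs \<or> i \<in> Suc ` {j. descent_at xs j} then des xs else des xs + 1)"
proof -
  have "i \<in> Suc ` {j. descent_at xs j} \<longleftrightarrow> 0 < i \<and> descent_at xs (i - 1)"
    by (cases i) auto
  moreover have "\<not> descent_at xs (length xs - 1)" "descent_at xs j \<Longrightarrow> Suc j < length xs" for j
    by (auto simp: descent_at_def)
  ultimately show ?thesis
    using des_insert_max[OF assms] i by auto
qed

lemma descent_at_subset: "{i. descent_at xs i} \<union> Suc ` {i. descent_at xs i} \<subseteq> {..<length xs}"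
  by (auto simp: descent_at_def)

lemma descent_at_disjoint_Suc:
  "no_double_descents xs \<Longrightarrow> {i. descent_at xs i} \<inter> Suc ` {i. descent_at xs i} = {}"
  by (auto simp: no_double_descents_altdef)

lemma des_le_half:
  assumes "no_double_descents xs"
  shows "2 * des xs \<le> length xs"
proof -
  let ?B = "{i. descent_at xs i}"
  have fin: "finite ?B"
    using descent_at_subset[of xs] by (meson finite_Un finite_lessThan finite_subset)
  have "2 * des xs = card (?B \<union> Suc ` ?B)"
    using card_Un_disjoint[OF fin finite_imageI[OF fin] descent_at_disjoint_Suc[OF assms]]
    by (simp add: des_eq_card_descent_at card_image)
  also have "\<dots> \<le> length xs"
    using card_mono[OF _ descent_at_subset] by simp
  finally show ?thesis .
qed

text \<open>Slot \<open>i\<close> is excluded when \<open>i\<close> starts a descent; the \<open>d\<close> slots ending a descent and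
  the last slot keep the number of descents, the remaining \<open>n - 2 d\<close> slots raise it by one.\<close>

lemma sum_des_insert_max:
  fixes F :: "nat \<Rightarrow> 'a::comm_ring_1"
  assumes v: "\<forall>x\<in>set xs. x < v" and no_dd: "no_double_descents xs"
  defines "n \<equiv> length xs" and "d \<equiv> des xs"
  shows "(\<Sum>i\<le>n. if descent_at xs i then 0 else F (des (take i xs @ v # drop i xs)))
     = of_nat (d + 1) * F d + of_nat (n - 2 * d) * F (d + 1)"
proof -
  define B where "B = {i. descent_at xs i}"
  define E where "E = Suc ` B"
  define R where "R = {..<n} - (E \<union> B)"
  define G where "G i = (if descent_at xs i then 0 else F (des (take i xs @ v # drop i xs)))" for i
  have sub: "E \<union> B \<subseteq> {..<n}" and disj: "B \<inter> E = {}"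
    using descent_at_subset[of xs] descent_at_disjoint_Suc[OF no_dd] by (auto simp: E_def B_def n_def)
  then have fin: "finite E" "finite B" "finite R"
    by (auto simp: R_def intro: finite_subset)
  have card_B: "card B = d" and card_E: "card E = d"
    by (simp_all add: B_def E_def d_def des_eq_card_descent_at card_image)
  moreover have "n \<notin> E"
    using sub by auto
  ultimately have card_nE: "card (insert n E) = d + 1" and card_R: "card R = n - 2 * d"
    using sub disj fin by (auto simp: R_def card_Diff_subset card_Un_disjoint Int_commute)
  have "{..n} = insert n E \<union> B \<union> R" and disj_nE: "insert n E \<inter> B = {}" "(insert n E \<union> B) \<inter> R = {}"
    using sub disj by (auto simp: R_def)
  then have "(\<Sum>i\<le>n. G i) = (\<Sum>i\<in>insert n E. G i) + (\<Sum>i\<in>B. G i) + (\<Sum>i\<in>R. G i)"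
    using fin by (simp only: sum.union_disjoint disj_nE finite_insert finite_Un simp_thms)
  also have "\<dots> = (\<Sum>i\<in>insert n E. F d) + (\<Sum>i\<in>B. 0) + (\<Sum>i\<in>R. F (d + 1))"
  proof -
    have "G i = F d" if "i \<in> insert n E" for i
    proof -
      have "\<not> descent_at xs i"
        using that disj by (auto simp: B_def n_def descent_at_def)
      then show ?thesis
        using that sub des_insert_max_cases[OF v, of i] by (auto simp: G_def E_def B_def d_def n_def)
    qed
    moreover have "G i = F (d + 1)" if "i \<in> R" for i
      using that des_insert_max_cases[OF v, of i] by (simp add: G_def R_def E_def B_def d_def n_def)
    ultimately show ?thesis
      by (intro arg_cong2[where f = "(+)"] sum.cong refl) (simp_all add: G_def B_def)
  qed
  also have "\<dots> = of_nat (d + 1) * F d + of_nat (n - 2 * d) * F (d + 1)"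
    using card_nE card_R by simp
  finally show ?thesis
    unfolding G_def .
qed

definition simsun_perms :: "nat \<Rightarrow> nat list set" where
  "simsun_perms n = {xs \<in> permutations_of_set {1..n}. simsun xs}"

lemma simsun_perms_Suc:
  "(\<Sum>s\<in>simsun_perms (Suc n). F (des s)) = (\<Sum>xs\<in>simsun_perms n.
      of_nat (des xs + 1) * F (des xs) + of_nat (n - 2 * des xs) * (F (des xs + 1) :: 'a::comm_ring_1))"
proof -
  have "(\<Sum>s\<in>simsun_perms (Suc n). F (des s))
      = (\<Sum>s\<in>permutations_of_set {1..Suc n}. if simsun s then F (des s) else 0)"
    unfolding simsun_perms_def by (rule sum.inter_filter) simp
  also have "\<dots> = (\<Sum>xs\<in>permutations_of_set {1..n}. \<Sum>i\<le>n.
      if simsun (take i xs @ Suc n # drop i xs) then F (des (take i xs @ Suc n # drop i xs)) else 0)"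
    unfolding insert_relabel_id[symmetric] by (rule sum_permutations_insert_max) simp
  also have "\<dots> = (\<Sum>xs\<in>permutations_of_set {1..n}. if simsun xs then
      of_nat (des xs + 1) * F (des xs) + of_nat (n - 2 * des xs) * F (des xs + 1) else 0)"
  proof (rule sum.cong[OF refl])
    fix xs
    assume xs: "xs \<in> permutations_of_set {1..n}"
    then have v: "\<forall>x\<in>set xs. x < Suc n" and len: "length xs = n"
      by (auto simp: permutations_of_set_def length_finite_permutations_of_set)
    have "(\<Sum>i\<le>n. if simsun (take i xs @ Suc n # drop i xs) then F (des (take i xs @ Suc n # drop i xs)) else 0)
      = (\<Sum>i\<le>n. if simsun xs then (if descent_at xs i then 0 else F (des (take i xs @ Suc n # drop i xs))) else 0)"
      by (rule sum.cong) (simp_all add: simsun_insert_max[OF v])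
    also have "\<dots> = (if simsun xs then
        of_nat (des xs + 1) * F (des xs) + of_nat (n - 2 * des xs) * F (des xs + 1) else 0)"
      using sum_des_insert_max[OF v simsun_imp_no_double_descents, of F] len by simp
    finally show "(\<Sum>i\<le>n. if simsun (take i xs @ Suc n # drop i xs) then F (des (take i xs @ Suc n # drop i xs)) else 0)
      = (if simsun xs then
        of_nat (des xs + 1) * F (des xs) + of_nat (n - 2 * des xs) * F (des xs + 1) else 0)" .
  qed
  also have "\<dots> = (\<Sum>xs\<in>simsun_perms n.
      of_nat (des xs + 1) * F (des xs) + of_nat (n - 2 * des xs) * F (des xs + 1))"
    unfolding simsun_perms_def by (rule sum.inter_filter[symmetric]) simp
  finally show ?thesis .
qed

section \<open>The alternating Eulerian polynomial as a sum over Simsun permutations\<close>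

definition simsun_form :: "nat \<Rightarrow> int poly" where
  "simsun_form n = (\<Sum>xs\<in>simsun_perms n. (1 + X) ^ (n - 2 * des xs) * (1 + X\<^sup>2) ^ des xs)"

lemma simsun_des_bound: "xs \<in> simsun_perms n \<Longrightarrow> 2 * des xs \<le> n"
  using des_le_half[OF simsun_imp_no_double_descents]
  by (fastforce simp: simsun_perms_def length_finite_permutations_of_set)

lemma alt_eulerian_op_simsun_term:
  "alt_eulerian_op (Suc (m + 2 * d)) ((1 + X) ^ m * (1 + X\<^sup>2) ^ d)
     = 2 * (of_nat (d + 1) * (1 + X) ^ (m + 1) * (1 + X\<^sup>2) ^ d
            + of_nat m * (1 + X) ^ (m - 1) * (1 + X\<^sup>2) ^ (d + 1))"
proof -
  have "pderiv ((1 + X) ^ m * (1 + X\<^sup>2) ^ d)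
      = of_nat m * (1 + X) ^ (m - 1) * (1 + X\<^sup>2) ^ d + of_nat d * 2 * X * (1 + X) ^ m * (1 + X\<^sup>2) ^ (d - 1)"
    by (simp add: pderiv_mult pderiv_power pderiv_add power2_eq_square of_nat_poly algebra_simps)
  then show ?thesis
    unfolding alt_eulerian_op_def
    by (cases m; cases d) (simp_all add: algebra_simps power2_eq_square; algebra)+
qed

lemma simsun_form_rec: "2 * simsun_form (Suc n) = alt_eulerian_op (Suc n) (simsun_form n)"
proof -
  define F where "F k = (1 + X) ^ (Suc n - 2 * k) * (1 + X\<^sup>2) ^ k" for k
  have "alt_eulerian_op (Suc n) (simsun_form n) = (\<Sum>xs\<in>simsun_perms n.
      alt_eulerian_op (Suc n) ((1 + X) ^ (n - 2 * des xs) * (1 + X\<^sup>2) ^ des xs))"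
    unfolding simsun_form_def alt_eulerian_op_sum ..
  also have "\<dots> = (\<Sum>xs\<in>simsun_perms n.
      2 * (of_nat (des xs + 1) * F (des xs) + of_nat (n - 2 * des xs) * F (des xs + 1)))"
  proof (rule sum.cong[OF refl])
    fix xs
    assume "xs \<in> simsun_perms n"
    then obtain m where n: "n = m + 2 * des xs"
      using simsun_des_bound by (metis le_add_diff_inverse2)
    have "of_nat m * F (des xs + 1) = of_nat m * (1 + X) ^ (m - 1) * (1 + X\<^sup>2) ^ (des xs + 1)"
      by (cases m) (simp_all add: F_def n)
    then show "alt_eulerian_op (Suc n) ((1 + X) ^ (n - 2 * des xs) * (1 + X\<^sup>2) ^ des xs)
        = 2 * (of_nat (des xs + 1) * F (des xs) + of_nat (n - 2 * des xs) * F (des xs + 1))"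
      using alt_eulerian_op_simsun_term[of m "des xs"] by (simp add: F_def n)
  qed
  also have "\<dots> = 2 * (\<Sum>xs\<in>simsun_perms n.
      of_nat (des xs + 1) * F (des xs) + of_nat (n - 2 * des xs) * F (des xs + 1))"
    by (simp only: sum_distrib_left)
  also have "\<dots> = 2 * simsun_form (Suc n)"
    unfolding simsun_perms_Suc[symmetric] by (simp add: simsun_form_def F_def)
  finally show ?thesis ..
qed

lemma alt_eulerian_1: "alt_eulerian 1 = 1"
proof -
  have "altdes [1] = 0"
    by (simp add: altdes_def alt_des_set_def)
  then show ?thesis
    by (simp add: alt_eulerian_def)
qed

lemma simsun_form_0: "simsun_form 0 = 1"
proof -
  have "simsun_perms 0 = {[]}"
    by (auto simp: simsun_perms_def simsun_def no_double_descents_def)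
  then show ?thesis
    by (simp add: simsun_form_def des_def)
qed

theorem alt_eulerian_eq_simsun_form: "alt_eulerian (Suc n) = simsun_form n"
proof (induction n)
  case 0
  then show ?case
    using alt_eulerian_1 simsun_form_0 by simp
next
  case (Suc n)
  have "2 * alt_eulerian (Suc (Suc n)) = 2 * simsun_form (Suc n)"
    using alt_eulerian_rec[of "Suc n"] Suc.IH simsun_form_rec[of n] by simp
  then show ?case
    by simp
qed

section \<open>Palindromicity and unimodality\<close>

definition coeff_int :: "int poly \<Rightarrow> int \<Rightarrow> int" where
  "coeff_int p z = (if z < 0 then 0 else coeff p (nat z))"

lemma coeff_int_neg: "z < 0 \<Longrightarrow> coeff_int p z = 0"
  by (simp add: coeff_int_def)

lemma coeff_int_of_nat: "coeff_int p (int i) = coeff p i"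
  by (simp add: coeff_int_def)

lemma coeff_int_add: "coeff_int (p + q) z = coeff_int p z + coeff_int q z"
  by (simp add: coeff_int_def)

lemma coeff_int_diff: "coeff_int (p - q) z = coeff_int p z - coeff_int q z"
  by (simp add: coeff_int_def)

lemma coeff_int_of_nat_mult: "coeff_int (of_nat m * p) z = of_nat m * coeff_int p z"
  by (simp add: coeff_int_def of_nat_poly)

lemma coeff_int_numeral_mult: "coeff_int (numeral k * p) z = numeral k * coeff_int p z"
  by (simp add: coeff_int_def numeral_poly)

lemma coeff_int_X_mult: "coeff_int (X * p) z = coeff_int p (z - 1)"
  by (auto simp: coeff_int_def X_def coeff_pCons nat_diff_distrib split: nat.split)

lemma coeff_int_pderiv: "coeff_int (pderiv p) z = (z + 1) * coeff_int p (z + 1)"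
  by (auto simp: coeff_int_def coeff_pderiv nat_add_distrib)

lemma coeff_int_alt_eulerian_op:
  "coeff_int (alt_eulerian_op n p) z
     = (int n + 1 - z) * (coeff_int p z + coeff_int p (z - 2))
       + (z + 1) * (coeff_int p (z + 1) + coeff_int p (z - 1))"
proof -
  let ?r = "of_nat n * p - p + pderiv p - X * pderiv p"
  have "alt_eulerian_op n p = 2 * p + 2 * (X * p) + ?r + X * (X * ?r)"
    unfolding alt_eulerian_op_def by (simp add: algebra_simps power2_eq_square)
  then show ?thesis
    by (simp only: coeff_int_add coeff_int_diff coeff_int_numeral_mult coeff_int_X_mult
        coeff_int_of_nat_mult coeff_int_pderiv) (simp add: algebra_simps)
qed

definition sym_unimodal :: "nat \<Rightarrow> int poly \<Rightarrow> bool" where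
  "sym_unimodal n p \<longleftrightarrow>
     (\<forall>a b. a + b = int n - 1 \<longrightarrow> coeff_int p a = coeff_int p b) \<and>
     (\<forall>z. 0 \<le> coeff_int p z) \<and> 0 < coeff_int p 0 \<and>
     (\<forall>i j. i \<le> j \<and> i + j \<le> int n - 1 \<longrightarrow> coeff_int p i \<le> coeff_int p j)"

lemma sym_unimodalD:
  assumes "sym_unimodal n p"
  shows "a + b = int n - 1 \<Longrightarrow> coeff_int p a = coeff_int p b"
    and "0 \<le> coeff_int p z"
    and "0 < coeff_int p 0"
    and "i \<le> j \<Longrightarrow> i + j \<le> int n - 1 \<Longrightarrow> coeff_int p i \<le> coeff_int p j"
  using assms unfolding sym_unimodal_def by blast+

lemma mono_upto_of_step:
  fixes f :: "int \<Rightarrow> int"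
  assumes step: "\<And>k. 2 * k \<le> N \<Longrightarrow> f (k - 1) \<le> f k"
  shows "i \<le> j \<Longrightarrow> 2 * j \<le> N \<Longrightarrow> f i \<le> f j"
proof (induction "nat (j - i)" arbitrary: j)
  case (Suc m)
  have "f i \<le> f (j - 1)"
    using Suc by (intro Suc.hyps) auto
  also have "\<dots> \<le> f j"
    using step Suc.prems by simp
  finally show ?case .
qed simp

lemma coeff_int_alt_eulerian_op_sym:
  assumes sym: "\<And>a b. a + b = int n - 1 \<Longrightarrow> coeff_int p a = coeff_int p b"
  shows "coeff_int (alt_eulerian_op n p) z = coeff_int (alt_eulerian_op n p) (int n - z)"
  using sym[of "int n - z" "z - 1"] sym[of "int n - z - 2" "z + 1"]
    sym[of "int n - z + 1" "z - 2"] sym[of "int n - z - 1" z]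
  by (simp add: coeff_int_alt_eulerian_op algebra_simps)

lemma coeff_int_alt_eulerian_op_nonneg:
  fixes z :: int
  assumes sym: "\<And>a b. a + b = int n - 1 \<Longrightarrow> coeff_int p a = coeff_int p b"
    and nonneg: "\<And>y. 0 \<le> coeff_int p y"
  shows "0 \<le> coeff_int (alt_eulerian_op n p) z"
proof (cases "0 \<le> z \<and> z \<le> int n + 1")
  case True
  then show ?thesis
    unfolding coeff_int_alt_eulerian_op using nonneg by (intro add_nonneg_nonneg mult_nonneg_nonneg) auto
next
  case False
  then have "z < 0 \<or> int n - z < 0"
    by auto
  then show ?thesis
    using coeff_int_alt_eulerian_op_sym[of n p, OF sym, where z = z] by (auto simp: coeff_int_neg)
qed

lemma coeff_int_alt_eulerian_op_step:
  assumes p: "sym_unimodal n p" and k: "2 * k \<le> int n"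
  shows "coeff_int (alt_eulerian_op n p) (k - 1) \<le> coeff_int (alt_eulerian_op n p) k"
proof (cases "k \<le> 0")
  case True
  then show ?thesis
    using coeff_int_alt_eulerian_op_nonneg[of n p, OF sym_unimodalD(1,2)[OF p], where z = k] by (simp add: coeff_int_neg)
next
  case False
  define c where "c = coeff_int p"
  have mono: "i \<le> j \<Longrightarrow> i + j \<le> int n - 1 \<Longrightarrow> c i \<le> c j" for i j
    unfolding c_def by (rule sym_unimodalD(4)[OF p])
  have "c (k - 3) \<le> c (k + 1)" "c (k - 1) \<le> c k" "c (k - 3) \<le> c (k - 2)"
    using k by (auto intro: mono)
  then have "0 \<le> (k + 1) * (c (k + 1) - c (k - 3))
      + (int n + 1 - 2 * k) * (c k - c (k - 1) + c (k - 2) - c (k - 3))"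
    using False k by (intro add_nonneg_nonneg mult_nonneg_nonneg) auto
  then show ?thesis
    unfolding coeff_int_alt_eulerian_op c_def[symmetric] by (simp add: algebra_simps)
qed

lemma sym_unimodal_alt_eulerian_op:
  assumes p: "sym_unimodal n p"
  shows "sym_unimodal (Suc n) (alt_eulerian_op n p)"
proof -
  let ?d = "coeff_int (alt_eulerian_op n p)"
  note sym = sym_unimodalD(1)[OF p] and nonneg = sym_unimodalD(2)[OF p]
  have sym_d: "?d a = ?d b" if "a + b = int (Suc n) - 1" for a b
  proof -
    have "b = int n - a"
      using that by simp
    then show ?thesis
      using coeff_int_alt_eulerian_op_sym[of n p, OF sym, where z = a] by simp
  qed
  have pos_d: "0 < ?d 0"
    using sym_unimodalD(3)[OF p] nonneg[of 1] by (simp add: coeff_int_alt_eulerian_op coeff_int_neg add_pos_nonneg)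
  have step_d: "?d (k - 1) \<le> ?d k" if "2 * k \<le> int n" for k
    using coeff_int_alt_eulerian_op_step[OF p that] .
  have mono_d: "?d i \<le> ?d j" if ij: "i \<le> j" "i + j \<le> int (Suc n) - 1" for i j
  proof (cases "2 * j \<le> int n")
    case True
    with ij show ?thesis
      using mono_upto_of_step[of "int n" ?d, OF step_d] by blast
  next
    case False
    with ij have "?d i \<le> ?d (int n - j)"
      by (intro mono_upto_of_step[of "int n" ?d, OF step_d]) auto
    also have "\<dots> = ?d j"
      by (rule sym_d) simp
    finally show ?thesis .
  qed
  show ?thesis
    unfolding sym_unimodal_def
    using sym_d coeff_int_alt_eulerian_op_nonneg[of n p, OF sym nonneg] pos_d mono_d by blast
qed

lemma sym_unimodal_double:
  assumes "sym_unimodal n (2 * q)"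
  shows "sym_unimodal n q"
  unfolding sym_unimodal_def
proof (intro conjI allI impI)
  show "coeff_int q a = coeff_int q b" if "a + b = int n - 1" for a b
    using sym_unimodalD(1)[OF assms that] by (simp add: coeff_int_numeral_mult)
  show "0 \<le> coeff_int q z" for z
    using sym_unimodalD(2)[OF assms, of z] by (simp add: coeff_int_numeral_mult)
  show "0 < coeff_int q 0"
    using sym_unimodalD(3)[OF assms] by (simp add: coeff_int_numeral_mult)
  show "coeff_int q i \<le> coeff_int q j" if "i \<le> j \<and> i + j \<le> int n - 1" for i j
    using sym_unimodalD(4)[OF assms, of i j] that by (simp add: coeff_int_numeral_mult)
qed

lemma sym_unimodal_alt_eulerian: "1 \<le> n \<Longrightarrow> sym_unimodal n (alt_eulerian n)"
proof (induction n rule: dec_induct)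
  case base
  show ?case
    unfolding alt_eulerian_1 by (simp add: sym_unimodal_def coeff_int_def)
next
  case (step m)
  then have "sym_unimodal (Suc m) (2 * alt_eulerian (Suc m))"
    using sym_unimodal_alt_eulerian_op alt_eulerian_rec by metis
  then show ?case
    by (rule sym_unimodal_double)
qed

lemma degree_sym_unimodal:
  assumes p: "sym_unimodal n p" and n: "1 \<le> n"
  shows "degree p = n - 1"
proof (rule antisym)
  note sym = sym_unimodalD(1)[OF p]
  have "coeff p i = 0" if "n - 1 < i" for i
    using sym[of "int i" "int n - 1 - int i"] that by (simp add: coeff_int_neg coeff_int_of_nat[symmetric])
  then show "degree p \<le> n - 1"
    by (intro degree_le) auto
  have "coeff p (n - 1) = coeff_int p 0"
    using sym[of "int (n - 1)" 0] n by (simp add: coeff_int_of_nat[symmetric])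
  then show "n - 1 \<le> degree p"
    using sym_unimodalD(3)[OF p] by (intro le_degree) simp
qed

lemma palindromic_unimodal_if_sym_unimodal:
  assumes p: "sym_unimodal n p" and n: "1 \<le> n"
  shows "palindromic p \<and> unimodal p"
proof -
  have deg: "degree p = n - 1"
    using degree_sym_unimodal[OF assms] .
  have sym: "coeff p i = coeff p (n - 1 - i)" if "i \<le> n - 1" for i
  proof -
    have "int i + int (n - 1 - i) = int n - 1"
      using that n by simp
    from sym_unimodalD(1)[OF p this] show ?thesis
      by (simp only: coeff_int_of_nat)
  qed
  have mono: "coeff p i \<le> coeff p j" if "i \<le> j" "i + j \<le> n - 1" for i j
  proof -
    have "int i \<le> int j" "int i + int j \<le> int n - 1"
      using that n by simp_all
    from sym_unimodalD(4)[OF p this] show ?thesis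
      by (simp only: coeff_int_of_nat)
  qed
  have dec: "coeff p j \<le> coeff p i" if "(n - 1) div 2 \<le> i" "i \<le> j" "j \<le> n - 1" for i j
  proof (cases "i = j")
    case False
    then have "coeff p (n - 1 - j) \<le> coeff p (n - 1 - i)"
      using that by (intro mono) auto
    then show ?thesis
      using sym[of i] sym[of j] that by simp
  qed simp
  have inc: "coeff p i \<le> coeff p j" if "i \<le> j" "j \<le> (n - 1) div 2" for i j
    using mono that by simp
  have "palindromic p"
    unfolding palindromic_def deg using sym by blast
  moreover have "unimodal p"
    unfolding unimodal_def deg
    by (intro exI[of _ "(n - 1) div 2"] conjI allI impI) (auto intro: inc dec)
  ultimately show ?thesis ..
qed

section \<open>The expansion in the basis \<open>(-2t)\<^sup>k (1 + t)\<^bsup>N - 2k\<^esup>\<close>\<close>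

definition gamma_basis :: "nat \<Rightarrow> nat \<Rightarrow> int poly" where
  "gamma_basis N k = [:0, -2:] ^ k * [:1, 1:] ^ (N - 2 * k)"

lemma one_plus_X: "1 + X = [:1, 1:]"
  by (simp add: X_def one_pCons)

lemma one_plus_X_squared: "1 + X\<^sup>2 = [:0, -2:] + [:1, 1:]\<^sup>2"
  by (simp add: X_def one_pCons power2_eq_square algebra_simps)

lemma simsun_term_gamma:
  assumes d: "2 * d \<le> N"
  shows "(1 + X) ^ (N - 2 * d) * (1 + X\<^sup>2) ^ d = (\<Sum>k\<le>N div 2. smult (int (d choose k)) (gamma_basis N k))"
proof -
  have "(1 + X) ^ (N - 2 * d) * (1 + X\<^sup>2) ^ d
      = (\<Sum>k\<le>d. of_nat (d choose k) * [:0, -2:] ^ k * ([:1, 1:] ^ (N - 2 * d) * ([:1, 1:]\<^sup>2) ^ (d - k)))"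
    unfolding one_plus_X one_plus_X_squared binomial_ring sum_distrib_left by (simp add: ac_simps)
  also have "\<dots> = (\<Sum>k\<le>d. smult (int (d choose k)) (gamma_basis N k))"
  proof (rule sum.cong[OF refl])
    fix k
    assume "k \<in> {..d}"
    then have "N - 2 * d + 2 * (d - k) = N - 2 * k"
      using d by auto
    then have "[:1, 1:] ^ (N - 2 * d) * ([:1, 1:]\<^sup>2) ^ (d - k) = ([:1, 1:] :: int poly) ^ (N - 2 * k)"
      by (simp only: power_mult[symmetric] power_add[symmetric])
    then show "of_nat (d choose k) * [:0, -2:] ^ k * ([:1, 1:] ^ (N - 2 * d) * ([:1, 1:]\<^sup>2) ^ (d - k))
        = smult (int (d choose k)) (gamma_basis N k)"
      by (simp add: gamma_basis_def smult_of_nat_eq_mult mult.assoc)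
  qed
  also have "\<dots> = (\<Sum>k\<le>N div 2. smult (int (d choose k)) (gamma_basis N k))"
    by (rule sum.mono_neutral_left) (use d in auto)
  finally show ?thesis .
qed

text \<open>\<open>simsun_gamma N k\<close> is the coefficient \<open>a(N + 1, k)\<close> of the statement.\<close>

definition simsun_gamma :: "nat \<Rightarrow> nat \<Rightarrow> int" where
  "simsun_gamma N k = (\<Sum>xs\<in>simsun_perms N. int (des xs choose k))"

lemma simsun_form_gamma: "simsun_form N = (\<Sum>k\<le>N div 2. smult (simsun_gamma N k) (gamma_basis N k))"
proof -
  have "simsun_form N = (\<Sum>xs\<in>simsun_perms N. \<Sum>k\<le>N div 2. smult (int (des xs choose k)) (gamma_basis N k))"
    unfolding simsun_form_def by (intro sum.cong refl simsun_term_gamma simsun_des_bound)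
  also have "\<dots> = (\<Sum>k\<le>N div 2. smult (simsun_gamma N k) (gamma_basis N k))"
    unfolding simsun_gamma_def smult_sum by (rule sum.swap)
  finally show ?thesis .
qed

text \<open>The coefficient of \<open>t\<^sup>k\<close> in \<open>gamma_basis N j\<close> vanishes for \<open>j > k\<close> and is \<open>(-2)\<^sup>k\<close>
  for \<open>j = k\<close>, so the basis is triangular.\<close>

lemma gamma_basis_independent:
  assumes "(\<Sum>k\<le>M. smult (c k) (gamma_basis N k)) = 0" and "k \<le> M"
  shows "c k = 0"
  using assms(2)
proof (induction k rule: less_induct)
  case (less k)
  have coeff_basis: "coeff (gamma_basis N j) k = (if k < j then 0 else (-2) ^ j * coeff ([:1, 1:] ^ (N - 2 * j)) (k - j))" for j
  proof -
    have "[:0, -2:] ^ j = (monom ((-2) ^ j) j :: int poly)"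
      by (simp add: monom_power flip: monom_Suc monom_0)
    then show ?thesis
      by (simp add: gamma_basis_def coeff_monom_mult)
  qed
  have "0 = coeff (\<Sum>j\<le>M. smult (c j) (gamma_basis N j)) k"
    using assms(1) by simp
  also have "\<dots> = (\<Sum>j\<le>M. if j = k then c k * (-2) ^ k else 0)"
    unfolding coeff_sum coeff_smult
  proof (rule sum.cong[OF refl])
    fix j
    assume "j \<in> {..M}"
    then show "c j * coeff (gamma_basis N j) k = (if j = k then c k * (-2) ^ k else 0)"
      using less by (cases "j < k") (auto simp: coeff_basis coeff_0_power)
  qed
  also have "\<dots> = c k * (-2) ^ k"
    using less.prems by simp
  finally show ?case
    by simp
qed

lemma pcompose_X_power: "pcompose ([:0, 1:] ^ k) q = q ^ k"
  by (induction k) (simp_all add: pcompose_mult pcompose_pCons pcompose_1)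

lemma pcompose_simsun_gamma:
  "pcompose (\<Sum>k\<le>N div 2. monom (simsun_gamma N k) k) [:-1, 1:] = simsun_des_poly N"
proof -
  let ?V = "[:-1, 1:] :: int poly"
  have "pcompose (\<Sum>k\<le>N div 2. monom (simsun_gamma N k) k) ?V
      = (\<Sum>k\<le>N div 2. smult (simsun_gamma N k) (?V ^ k))"
    unfolding pcompose_sum by (simp add: monom_altdef pcompose_smult pcompose_X_power)
  also have "\<dots> = (\<Sum>k\<le>N div 2. \<Sum>xs\<in>simsun_perms N. of_nat (des xs choose k) * ?V ^ k)"
    unfolding simsun_gamma_def smult_sum by (simp add: smult_of_nat_eq_mult)
  also have "\<dots> = (\<Sum>xs\<in>simsun_perms N. \<Sum>k\<le>N div 2. of_nat (des xs choose k) * ?V ^ k * 1 ^ (des xs - k))"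
    by (subst sum.swap) simp
  also have "\<dots> = (\<Sum>xs\<in>simsun_perms N. (?V + 1) ^ des xs)"
  proof (rule sum.cong[OF refl])
    fix xs
    assume "xs \<in> simsun_perms N"
    then have "des xs \<le> N div 2"
      using simsun_des_bound by fastforce
    then show "(\<Sum>k\<le>N div 2. of_nat (des xs choose k) * ?V ^ k * 1 ^ (des xs - k)) = (?V + 1) ^ des xs"
      unfolding binomial_ring by (intro sum.mono_neutral_right) auto
  qed
  also have "\<dots> = simsun_des_poly N"
    by (simp add: simsun_des_poly_def simsun_perms_def monom_altdef one_pCons)
  finally show ?thesis .
qed

theorem theorem1p1:
  fixes n :: nat
  assumes "n \<ge> 1"
  shows "palindromic (alt_eulerian n) \<and> unimodal (alt_eulerian n) \<and>
    (\<exists>a :: nat \<Rightarrow> int. alt_eulerian n =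
        (\<Sum>k\<le>(n - 1) div 2. smult (a k) ([:0, -2:] ^ k * [:1, 1:] ^ (n - 1 - 2 * k)))) \<and>
    (\<forall>a :: nat \<Rightarrow> int. alt_eulerian n =
        (\<Sum>k\<le>(n - 1) div 2. smult (a k) ([:0, -2:] ^ k * [:1, 1:] ^ (n - 1 - 2 * k)))
      \<longrightarrow> pcompose (\<Sum>k\<le>(n - 1) div 2. monom (a k) k) [:-1, 1:] = simsun_des_poly (n - 1))"
proof -
  define N where "N = n - 1"
  have expansion: "alt_eulerian n = (\<Sum>k\<le>N div 2. smult (simsun_gamma N k) (gamma_basis N k))"
    using alt_eulerian_eq_simsun_form[of N] simsun_form_gamma[of N] assms by (simp add: N_def)
  have unique: "(\<Sum>k\<le>N div 2. monom (a k) k) = (\<Sum>k\<le>N div 2. monom (simsun_gamma N k) k)"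
    if "alt_eulerian n = (\<Sum>k\<le>N div 2. smult (a k) (gamma_basis N k))" for a
  proof -
    have "(\<Sum>k\<le>N div 2. smult ((\<lambda>k. a k - simsun_gamma N k) k) (gamma_basis N k)) = 0"
      using that expansion by (simp add: smult_diff_left sum_subtractf)
    from gamma_basis_independent[OF this] show ?thesis
      by (intro sum.cong) simp_all
  qed
  have "palindromic (alt_eulerian n) \<and> unimodal (alt_eulerian n)"
    using palindromic_unimodal_if_sym_unimodal[OF sym_unimodal_alt_eulerian[OF assms] assms] .
  moreover have "\<exists>a. alt_eulerian n = (\<Sum>k\<le>N div 2. smult (a k) (gamma_basis N k))"
    using expansion by blast
  ultimately show ?thesis
    using unique pcompose_simsun_gamma unfolding N_def gamma_basis_def by simp
qed

end
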